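(* Let $p\geq 1$ be an integer, $H$ a connected graph with at least $2p$ vertices, and $T$ a complete rooted ternary tree with at least $p$ vertices. Let $V\subseteq V(T(H))$ with $OC(T,V)=V(T)$ and let $SV$ be an ordering of $V$. Then $T(H)$ has a witnessing matching $M$ for $SV$ of size at least $p\,(tr(|V(T)|)-tr(p))$. Moreover, $M$ is supported by a partition of $SV$ into a prefix $SV_1$ and a suffix $SV_2$ such that $|V(T(H))|-|SV_i|\geq p^2$ for each $i\in\{1,2\}$.
   Context: Complete rooted ternary tree of height $h$: rooted tree, every root-leaf path has exactly $h$ edges, every non-leaf vertex has exactly 3 children. For real $x\geq1$, $tr(x)$ is the largest integer $h\geq0$ such that a complete rooted ternary tree of height $h$ has at most $x$ vertices. Graph $T(H)$: for $V(H)=\{1,\dots,m\}$, vertices $v^i$ ($v\in V(T)$, $1\le i\le m$); for each $v$, $v^1,\dots,v^m$ span a copy $H^v$ of $H$; and $u^iv^i$ is an edge for each $i$ whenever $uv\in E(T)$. $OC(T,V)=\{u\in V(T): V(H^u)\cap V\neq\emptyset\}$. For a graph $G$, $V\subseteq V(G)$ and an ordering $SV$ of $V$: a partition of $SV$ into a prefix $SV_1$ and a suffix $SV_2$ supports an edge $\{u,v\}$ if one endpoint is in $SV_1$ and the other in $SV_2$, or one endpoint is in $V$ and the other in $V(G)\setminus V$; a matching is supported by the partition if all its edges are, and it is witnessing for $SV$ if it is supported by some such prefix/suffix partition. *)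

theory Defs
  imports Main "HOL.Real"
begin

definition simple_graph :: "'a set \<Rightarrow> 'a set set \<Rightarrow> bool" where
  "simple_graph V E \<longleftrightarrow> finite V \<and>
     (\<forall>e\<in>E. \<exists>u v. u \<noteq> v \<and> u \<in> V \<and> v \<in> V \<and> e = {u, v})"

definition connected_graph :: "'a set \<Rightarrow> 'a set set \<Rightarrow> bool" where
  "connected_graph V E \<longleftrightarrow> simple_graph V E \<and> V \<noteq> {} \<and>
     (\<forall>u\<in>V. \<forall>v\<in>V. (u, v) \<in> {(x, y). {x, y} \<in> E}\<^sup>*)"

definition matching :: "'a set set \<Rightarrow> 'a set set \<Rightarrow> bool" where
  "matching E M \<longleftrightarrow> M \<subseteq> E \<and> (\<forall>e\<in>M. \<forall>e'\<in>M. e \<noteq> e' \<longrightarrow> e \<inter> e' = {})"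

text \<open>Canonical complete rooted ternary tree of height h: vertices are words over
  {0,1,2} of length at most h, root is the empty word, the children of w (length < h)
  are w@[0], w@[1], w@[2].\<close>

definition ctt_verts :: "nat \<Rightarrow> nat list set" where
  "ctt_verts h = {xs. length xs \<le> h \<and> set xs \<subseteq> {0, 1, 2}}"

definition ctt_edges :: "nat \<Rightarrow> nat list set set" where
  "ctt_edges h = {{xs, xs @ [i]} | xs i. xs \<in> ctt_verts h \<and> length xs < h \<and> i < 3}"

definition complete_ternary_tree :: "'b set \<Rightarrow> 'b set set \<Rightarrow> bool" where
  "complete_ternary_tree VT ET \<longleftrightarrow> simple_graph VT ET \<and>
     (\<exists>h f. bij_betw f VT (ctt_verts h) \<and>
        (\<forall>u\<in>VT. \<forall>v\<in>VT. {u, v} \<in> ET \<longleftrightarrow> {f u, f v} \<in> ctt_edges h))"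

definition tr :: "real \<Rightarrow> nat" where
  "tr x = (GREATEST h. real (card (ctt_verts h)) \<le> x)"

definition TH_verts :: "'b set \<Rightarrow> nat \<Rightarrow> ('b \<times> nat) set" where
  "TH_verts VT m = VT \<times> {1..m}"

definition TH_edges :: "'b set \<Rightarrow> 'b set set \<Rightarrow> nat set set \<Rightarrow> nat \<Rightarrow> ('b \<times> nat) set set" where
  "TH_edges VT ET EH m =
     {{(v, i), (v, j)} | v i j. v \<in> VT \<and> {i, j} \<in> EH}
     \<union> {{(u, i), (v, i)} | u v i. {u, v} \<in> ET \<and> i \<in> {1..m}}"

definition OC :: "'b set \<Rightarrow> ('b \<times> nat) set \<Rightarrow> 'b set" where
  "OC VT V = {u \<in> VT. V \<inter> ({u} \<times> UNIV) \<noteq> {}}"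

definition is_ordering :: "'a list \<Rightarrow> 'a set \<Rightarrow> bool" where
  "is_ordering SV V \<longleftrightarrow> distinct SV \<and> set SV = V"

definition supports :: "'a set \<Rightarrow> 'a set \<Rightarrow> 'a list \<Rightarrow> 'a list \<Rightarrow> 'a set \<Rightarrow> bool" where
  "supports VG V SV1 SV2 e \<longleftrightarrow> (\<exists>x y. e = {x, y} \<and>
     ((x \<in> set SV1 \<and> y \<in> set SV2) \<or> (x \<in> V \<and> y \<in> VG - V)))"

definition supported_by :: "'a set \<Rightarrow> 'a set \<Rightarrow> 'a list \<Rightarrow> 'a list \<Rightarrow> 'a set set \<Rightarrow> bool" where
  "supported_by VG V SV1 SV2 M \<longleftrightarrow> (\<forall>e\<in>M. supports VG V SV1 SV2 e)"

definition witnessing :: "'a set \<Rightarrow> 'a set set \<Rightarrow> 'a set \<Rightarrow> 'a list \<Rightarrow> 'a set set \<Rightarrow> bool" where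
  "witnessing VG EG V SV M \<longleftrightarrow> matching EG M \<and>
     (\<exists>k\<le>length SV. supported_by VG V (take k SV) (drop k SV) M)"

end

theory Submission
  imports Defs
begin

text \<open>Fix a split of \<open>SV\<close> into a prefix and a suffix and colour the vertices of \<open>T(H)\<close> by
  prefix, suffix and outside \<open>V\<close>; an edge with ends of different colours is supported.
  Call a tree vertex prefix-rich (suffix-rich) if fewer than \<open>p\<close> vertices of its copy of \<open>H\<close>
  lie outside the prefix (suffix). If a connected set \<open>S\<close> of at least \<open>p\<close> tree vertices
  contains a vertex that is not prefix-rich and one that is not suffix-rich, then
  \<open>S \<times> V(H)\<close> carries \<open>p\<close> disjoint supported edges: either \<open>p\<close> layers are bichromatic on
  \<open>S\<close>, giving a tree edge in each, or every copy \<open>H\<^sup>v\<close> (\<open>v \<in> S\<close>) is bichromatic, giving an edge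
  of \<open>H\<close> in each.

  Let \<open>t = tr(p)\<close>. Every subtree of height \<open>t + 1 + d\<close> has a split for which it is balanced
  (it has a vertex of each kind and at least \<open>p\<^sup>2\<close> vertices of \<open>T(H)\<close> outside the prefix and
  outside the suffix) together with \<open>p (d + 1)\<close> disjoint supported edges inside. For \<open>d = 0\<close>
  the subtree has more than \<open>p\<close> vertices, which allows choosing a balanced split. For the
  step, the root together with two of the three children provides \<open>p\<close> edges in addition to
  those of the third child. Applied to the whole tree, balance yields the bounds on the
  lengths of the prefix and the suffix.\<close>

lemma exists_sorted_triple:
  fixes K :: "nat \<Rightarrow> 'a::linorder"
  shows "\<exists>a b c. a < 3 \<and> b < 3 \<and> c < 3 \<and> a \<noteq> b \<and> a \<noteq> c \<and> b \<noteq> c \<and> K a \<le> K b \<and> K b \<le> K c"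
proof (rule le_cases3[of "K 0" "K 1" "K 2"])
  show ?thesis if "K 0 \<le> K 1" "K 1 \<le> K 2" using that by (intro exI[of _ 0] exI[of _ 1] exI[of _ 2]) simp
  show ?thesis if "K 1 \<le> K 0" "K 0 \<le> K 2" using that by (intro exI[of _ 1] exI[of _ 0] exI[of _ 2]) simp
  show ?thesis if "K 0 \<le> K 2" "K 2 \<le> K 1" using that by (intro exI[of _ 0] exI[of _ 2] exI[of _ 1]) simp
  show ?thesis if "K 2 \<le> K 1" "K 1 \<le> K 0" using that by (intro exI[of _ 2] exI[of _ 1] exI[of _ 0]) simp
  show ?thesis if "K 1 \<le> K 2" "K 2 \<le> K 0" using that by (intro exI[of _ 1] exI[of _ 2] exI[of _ 0]) simp
  show ?thesis if "K 2 \<le> K 0" "K 0 \<le> K 1" using that by (intro exI[of _ 2] exI[of _ 0] exI[of _ 1]) simp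
qed

lemma card_Times_diff_eq_sum:
  assumes "finite Q" "finite B"
  shows "card (Q \<times> B - Y) = (\<Sum>v\<in>Q. card ({v} \<times> B - Y))"
proof -
  have "Q \<times> B - Y = (\<Union>v\<in>Q. {v} \<times> B - Y)" by auto
  then show ?thesis by (simp only:) (rule card_UN_disjoint, use assms in auto)
qed

lemma rtrancl_label_change:
  assumes "(x, y) \<in> R\<^sup>*" "c x \<noteq> c y"
  shows "\<exists>a b. (a, b) \<in> R \<and> c a \<noteq> c b"
  using assms by (induction rule: rtrancl_induct) (simp, metis)

lemma fibred_family_inj_disjoint:
  assumes "\<And>i. i \<in> I \<Longrightarrow> e i \<noteq> {}" "\<And>i x. i \<in> I \<Longrightarrow> x \<in> e i \<Longrightarrow> \<phi> x = i"
  shows "inj_on e I" "pairwise disjnt (e ` I)"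
proof -
  show "inj_on e I" by (rule inj_onI) (metis assms equals0I)
  show "pairwise disjnt (e ` I)"
    by (rule pairwise_imageI) (metis assms(2) disjnt_iff)
qed

lemma double_square_le_mult:
  fixes c m p :: nat
  assumes "c \<ge> p" "m \<ge> 2 * p"
  shows "2 * p\<^sup>2 \<le> c * m"
proof -
  have "p * (2 * p) \<le> c * m" using assms by (rule mult_le_mono)
  then show ?thesis by (simp add: power2_eq_square)
qed

definition ctt_size :: "nat \<Rightarrow> nat" where
  "ctt_size h = card (ctt_verts h)"

lemma finite_ctt_verts: "finite (ctt_verts h)"
proof -
  have "ctt_verts h = {xs. set xs \<subseteq> {0, 1, 2} \<and> length xs \<le> h}"
    unfolding ctt_verts_def by auto
  then show ?thesis using finite_lists_length_le[of "{0, 1, 2 :: nat}" h] by simp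
qed

lemma ctt_size_0: "ctt_size 0 = 1"
proof -
  have "ctt_verts 0 = {[]}" unfolding ctt_verts_def by auto
  then show ?thesis unfolding ctt_size_def by simp
qed

lemma strict_mono_ctt_size: "strict_mono ctt_size"
proof (rule strict_mono_Suc_iff[THEN iffD2], intro allI)
  fix j
  have "replicate (Suc j) 0 \<in> ctt_verts (Suc j) - ctt_verts j" unfolding ctt_verts_def by auto
  moreover have "ctt_verts j \<subseteq> ctt_verts (Suc j)" unfolding ctt_verts_def by auto
  ultimately have "ctt_verts j \<subset> ctt_verts (Suc j)" by blast
  then show "ctt_size j < ctt_size (Suc j)"
    unfolding ctt_size_def using finite_ctt_verts by (rule psubset_card_mono[rotated])
qed

lemma tr_eqI:
  assumes "ctt_size t \<le> x" "x < ctt_size (Suc t)"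
  shows "tr (real x) = t"
  unfolding tr_def
proof (rule Greatest_equality)
  show "real (card (ctt_verts t)) \<le> real x" using assms(1) by (simp add: ctt_size_def)
next
  fix y assume "real (card (ctt_verts y)) \<le> real x"
  then have "ctt_size y < ctt_size (Suc t)" using assms(2) by (simp add: ctt_size_def)
  then show "y \<le> t" using strict_mono_less[OF strict_mono_ctt_size] by simp
qed

lemma ctt_size_bracket:
  assumes "x \<ge> 1"
  obtains t where "ctt_size t \<le> x" "x < ctt_size (Suc t)"
proof -
  define P where "P t \<longleftrightarrow> ctt_size t \<le> x" for t
  have bounded: "P t \<Longrightarrow> t \<le> x" for t
    unfolding P_def using strict_mono_imp_increasing[OF strict_mono_ctt_size, of t] by simp
  have "P 0" unfolding P_def using assms ctt_size_0 by simp
  define t where "t = (GREATEST t. P t)"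
  have "P t" unfolding t_def using GreatestI_nat[of P 0 x] \<open>P 0\<close> bounded by blast
  moreover have "\<not> P (Suc t)"
    using Greatest_le_nat[of P "Suc t" x] bounded unfolding t_def by fastforce
  ultimately show thesis using that unfolding P_def by simp
qed

definition ctt_subtree :: "nat list \<Rightarrow> nat \<Rightarrow> nat list set" where
  "ctt_subtree w j = (\<lambda>z. w @ z) ` ctt_verts j"

lemma card_ctt_subtree: "card (ctt_subtree w j) = ctt_size j"
  unfolding ctt_subtree_def ctt_size_def by (rule card_image) (auto simp: inj_on_def)

lemma ctt_subtree_subset: "length w + j \<le> h \<Longrightarrow> set w \<subseteq> {0, 1, 2} \<Longrightarrow> ctt_subtree w j \<subseteq> ctt_verts h"
  unfolding ctt_subtree_def ctt_verts_def by auto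

lemma ctt_subtree_Nil: "ctt_subtree [] h = ctt_verts h"
  unfolding ctt_subtree_def by simp

lemma root_in_ctt_subtree: "w \<in> ctt_subtree w j"
  unfolding ctt_subtree_def ctt_verts_def by (auto intro!: image_eqI[where x = "[]"])

lemma child_ctt_subtree_subset: "c < 3 \<Longrightarrow> ctt_subtree (w @ [c]) j \<subseteq> ctt_subtree w (Suc j)"
  unfolding ctt_subtree_def ctt_verts_def by (auto intro!: image_eqI[where x = "c # _"])

lemma child_ctt_subtree_disjoint:
  assumes "b \<noteq> a" "b \<noteq> c"
  shows "ctt_subtree (w @ [b]) j \<inter> insert w (ctt_subtree (w @ [a]) j \<union> ctt_subtree (w @ [c]) j) = {}"
  using assms unfolding ctt_subtree_def by auto

lemma complete_ternary_tree_parametrization: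
  assumes "complete_ternary_tree VT ET"
  obtains h g where "bij_betw g (ctt_verts h) VT"
    "\<And>x c. x \<in> ctt_verts h \<Longrightarrow> length x < h \<Longrightarrow> c < 3 \<Longrightarrow> {g x, g (x @ [c])} \<in> ET"
proof -
  obtain h f where f: "bij_betw f VT (ctt_verts h)"
    and f_edge: "\<forall>u\<in>VT. \<forall>v\<in>VT. {u, v} \<in> ET \<longleftrightarrow> {f u, f v} \<in> ctt_edges h"
    using assms unfolding complete_ternary_tree_def by blast
  define g where "g = inv_into VT f"
  have g: "bij_betw g (ctt_verts h) VT" unfolding g_def by (rule bij_betw_inv_into[OF f])
  have "{g x, g (x @ [c])} \<in> ET" if x: "x \<in> ctt_verts h" "length x < h" "c < 3" for x c
  proof -
    have xc: "x @ [c] \<in> ctt_verts h" using x unfolding ctt_verts_def by auto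
    have "f (g x) = x" "f (g (x @ [c])) = x @ [c]"
      unfolding g_def using x(1) xc bij_betw_inv_into_right[OF f] by auto
    moreover have "{x, x @ [c]} \<in> ctt_edges h" unfolding ctt_edges_def using x by blast
    ultimately show ?thesis using f_edge x(1) xc g by (simp add: bij_betw_apply)
  qed
  with g show thesis using that by blast
qed

locale ternary_product_ordering =
  fixes p m :: nat and EH :: "nat set set" and VT :: "'b set" and ET :: "'b set set"
    and V :: "('b \<times> nat) set" and SV :: "('b \<times> nat) list"
    and h :: nat and g :: "nat list \<Rightarrow> 'b"
  assumes p_pos: "p \<ge> 1" and H_connected: "connected_graph {1..m} EH" and m_ge: "m \<ge> 2 * p"
    and g_bij: "bij_betw g (ctt_verts h) VT"
    and g_edge: "\<And>x c. x \<in> ctt_verts h \<Longrightarrow> length x < h \<Longrightarrow> c < 3 \<Longrightarrow> {g x, g (x @ [c])} \<in> ET"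
    and V_subset: "V \<subseteq> TH_verts VT m" and OC_V: "OC VT V = VT"
    and SV_ordering: "is_ordering SV V"
begin

abbreviation "VG \<equiv> TH_verts VT m"
abbreviation "EG \<equiv> TH_edges VT ET EH m"
abbreviation pre :: "nat \<Rightarrow> ('b \<times> nat) set" where "pre k \<equiv> set (take k SV)"
abbreviation suf :: "nat \<Rightarrow> ('b \<times> nat) set" where "suf k \<equiv> set (drop k SV)"

lemma distinct_SV: "distinct SV" and set_SV: "set SV = V"
  using SV_ordering unfolding is_ordering_def by auto

lemma pre_suf_disjoint: "pre k \<inter> suf k = {}"
  using set_take_disj_set_drop_if_distinct[OF distinct_SV, of k k] by simp

lemma pre_Un_suf: "pre k \<union> suf k = V"
  using set_SV by (metis append_take_drop_id set_append)

lemma finite_VT: "finite VT"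
  using g_bij finite_ctt_verts bij_betw_finite by blast

lemma finite_VG: "finite VG"
  unfolding TH_verts_def using finite_VT by simp

lemma V_meets_copy: "u \<in> VT \<Longrightarrow> \<exists>i. (u, i) \<in> V"
  using OC_V unfolding OC_def by blast

definition outside_prefix :: "'b set \<Rightarrow> nat \<Rightarrow> nat" where
  "outside_prefix Q k = card (Q \<times> {1..m} - pre k)"

definition outside_suffix :: "'b set \<Rightarrow> nat \<Rightarrow> nat" where
  "outside_suffix Q k = card (Q \<times> {1..m} - suf k)"

definition prefix_rich :: "nat \<Rightarrow> 'b \<Rightarrow> bool" where
  "prefix_rich k u \<longleftrightarrow> outside_prefix {u} k < p"

definition suffix_rich :: "nat \<Rightarrow> 'b \<Rightarrow> bool" where
  "suffix_rich k u \<longleftrightarrow> outside_suffix {u} k < p"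

definition balanced :: "'b set \<Rightarrow> nat \<Rightarrow> bool" where
  "balanced Q k \<longleftrightarrow> (\<exists>u\<in>Q. \<not> prefix_rich k u) \<and> (\<exists>u\<in>Q. \<not> suffix_rich k u)
     \<and> outside_prefix Q k \<ge> p\<^sup>2 \<and> outside_suffix Q k \<ge> p\<^sup>2"

lemma outside_prefix_eq_sum: "finite Q \<Longrightarrow> outside_prefix Q k = (\<Sum>v\<in>Q. outside_prefix {v} k)"
  unfolding outside_prefix_def by (rule card_Times_diff_eq_sum) simp_all

lemma outside_suffix_eq_sum: "finite Q \<Longrightarrow> outside_suffix Q k = (\<Sum>v\<in>Q. outside_suffix {v} k)"
  unfolding outside_suffix_def by (rule card_Times_diff_eq_sum) simp_all

lemma outside_cover:
  assumes "finite Q"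
  shows "card Q * m \<le> outside_prefix Q k + outside_suffix Q k"
proof -
  have "Q \<times> {1..m} \<subseteq> (Q \<times> {1..m} - pre k) \<union> (Q \<times> {1..m} - suf k)"
    using pre_suf_disjoint by blast
  then have "card (Q \<times> {1..m}) \<le> card ((Q \<times> {1..m} - pre k) \<union> (Q \<times> {1..m} - suf k))"
    by (rule card_mono[rotated]) (use assms in simp)
  also have "\<dots> \<le> outside_prefix Q k + outside_suffix Q k"
    unfolding outside_prefix_def outside_suffix_def by (rule card_Un_le)
  finally show ?thesis by (simp add: card_cartesian_product)
qed

lemma outside_mono:
  assumes "Q \<subseteq> Q'" "finite Q'"
  shows "outside_prefix Q k \<le> outside_prefix Q' k" "outside_suffix Q k \<le> outside_suffix Q' k"
  unfolding outside_prefix_def outside_suffix_def using assms by (auto intro!: card_mono)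

lemma not_prefix_rich_and_suffix_rich: "\<not> (prefix_rich k u \<and> suffix_rich k u)"
proof
  assume "prefix_rich k u \<and> suffix_rich k u"
  with outside_cover[of "{u}" k] m_ge show False
    unfolding prefix_rich_def suffix_rich_def by simp
qed

lemma prefix_rich_mono:
  assumes "k \<le> k'" "prefix_rich k u"
  shows "prefix_rich k' u"
proof -
  have "{u} \<times> {1..m} - pre k' \<subseteq> {u} \<times> {1..m} - pre k"
    using set_take_subset_set_take[OF assms(1), of SV] by blast
  then have "outside_prefix {u} k' \<le> outside_prefix {u} k"
    unfolding outside_prefix_def by (rule card_mono[rotated]) simp
  then show ?thesis using assms(2) unfolding prefix_rich_def by simp
qed

lemma suffix_rich_antimono:
  assumes "k \<le> k'" "suffix_rich k' u"
  shows "suffix_rich k u"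
proof -
  have "{u} \<times> {1..m} - suf k \<subseteq> {u} \<times> {1..m} - suf k'"
    using set_drop_subset_set_drop[OF assms(1), of SV] by blast
  then have "outside_suffix {u} k \<le> outside_suffix {u} k'"
    unfolding outside_suffix_def by (rule card_mono[rotated]) simp
  then show ?thesis using assms(2) unfolding suffix_rich_def by simp
qed

lemma balanced_mono:
  assumes "Q \<subseteq> Q'" "finite Q'" "balanced Q k"
  shows "balanced Q' k"
  using assms(3) outside_mono[OF assms(1,2), of k] assms(1) unfolding balanced_def by (meson le_trans subsetD)

definition colour :: "nat \<Rightarrow> 'b \<times> nat \<Rightarrow> nat" where
  "colour k x = (if x \<in> pre k then 0 else if x \<in> V then 1 else 2)"

lemma colour_eq_0_iff: "colour k x = 0 \<longleftrightarrow> x \<in> pre k"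
  unfolding colour_def by simp

lemma suf_if_colour_eq_1: "colour k x = 1 \<Longrightarrow> x \<in> suf k"
  unfolding colour_def using pre_Un_suf by (auto split: if_splits)

lemma colour_of_V: "x \<in> V \<Longrightarrow> colour k x \<noteq> 2"
  unfolding colour_def by simp

lemma supports_if_colours_differ:
  assumes "x \<in> VG" "y \<in> VG" "colour k x \<noteq> colour k y"
  shows "supports VG V (take k SV) (drop k SV) {x, y}"
proof -
  have one_way: "a \<in> pre k \<and> b \<in> suf k \<or> a \<in> V \<and> b \<in> VG - V"
    if "b \<in> VG" "colour k a < colour k b" for a b
  proof (cases "a \<in> pre k")
    case True
    then show ?thesis using that pre_Un_suf[of k] unfolding colour_def by (auto split: if_splits)
  next
    case False
    then have "a \<in> V" "b \<notin> V" using that unfolding colour_def by (auto split: if_splits)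
    then show ?thesis using that(1) by blast
  qed
  show ?thesis
  proof (cases "colour k x < colour k y")
    case True
    then show ?thesis using one_way[OF assms(2)] unfolding supports_def by blast
  next
    case False
    then have "colour k y < colour k x" using assms(3) by simp
    then show ?thesis using one_way[OF assms(1)] unfolding supports_def
      by (intro exI[of _ y] exI[of _ x]) (simp add: insert_commute)
  qed
qed

lemma copy_edge_in_EG: "v \<in> VT \<Longrightarrow> {a, b} \<in> EH \<Longrightarrow> {(v, a), (v, b)} \<in> EG"
  unfolding TH_edges_def by (intro UnI1 CollectI exI[of _ v] exI[of _ a] exI[of _ b]) simp

lemma layer_edge_in_EG: "{a, b} \<in> ET \<Longrightarrow> i \<in> {1..m} \<Longrightarrow> {(a, i), (b, i)} \<in> EG"
  unfolding TH_edges_def by (intro UnI2 CollectI exI[of _ a] exI[of _ b] exI[of _ i]) simp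

lemma EG_nonempty: "e \<in> EG \<Longrightarrow> e \<noteq> {}"
  unfolding TH_edges_def by auto

definition supported_matching :: "nat \<Rightarrow> ('b \<times> nat) set \<Rightarrow> ('b \<times> nat) set set \<Rightarrow> bool" where
  "supported_matching k Z M \<longleftrightarrow> finite M \<and> matching EG M \<and> \<Union>M \<subseteq> Z
     \<and> supported_by VG V (take k SV) (drop k SV) M"

lemma supported_matching_of_choices:
  assumes "finite I" "card I \<ge> p"
    and edge: "\<And>i. i \<in> I \<Longrightarrow> \<exists>e\<in>EG. e \<subseteq> Z \<and> supports VG V (take k SV) (drop k SV) e \<and> (\<forall>x\<in>e. \<phi> x = i)"
  shows "\<exists>M. supported_matching k Z M \<and> card M = p"
proof -
  obtain e where e: "\<forall>i\<in>I. e i \<in> EG \<and> e i \<subseteq> Z \<and> supports VG V (take k SV) (drop k SV) (e i)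
      \<and> (\<forall>x\<in>e i. \<phi> x = i)"
    using bchoice[of I] edge by (metis (no_types, lifting))
  obtain J where J: "J \<subseteq> I" "card J = p" using obtain_subset_with_card_n[OF assms(2)] by blast
  have "\<And>i. i \<in> J \<Longrightarrow> e i \<noteq> {}" "\<And>i x. i \<in> J \<Longrightarrow> x \<in> e i \<Longrightarrow> \<phi> x = i"
    using e J(1) EG_nonempty by blast+
  note fibred = fibred_family_inj_disjoint[of J e \<phi>, OF this]
  have "matching EG (e ` J)"
    using e J(1) fibred(2) unfolding matching_def pairwise_def disjnt_def by blast
  then have "supported_matching k Z (e ` J)"
    unfolding supported_matching_def supported_by_def using e J(1) finite_subset[OF J(1) assms(1)] by blast
  moreover have "card (e ` J) = p" using card_image[OF fibred(1)] J(2) by simp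
  ultimately show ?thesis by blast
qed

lemma supported_matching_Un:
  assumes M1: "supported_matching k Z1 M1" and M2: "supported_matching k Z2 M2" and "Z1 \<inter> Z2 = {}"
  shows "supported_matching k (Z1 \<union> Z2) (M1 \<union> M2)" "card (M1 \<union> M2) = card M1 + card M2"
proof -
  from M1 have fin1: "finite M1" and sub1: "M1 \<subseteq> EG" and Z1: "\<Union>M1 \<subseteq> Z1"
    and dis1: "\<forall>e\<in>M1. \<forall>e'\<in>M1. e \<noteq> e' \<longrightarrow> e \<inter> e' = {}"
    and sup1: "supported_by VG V (take k SV) (drop k SV) M1"
    unfolding supported_matching_def matching_def by auto
  from M2 have fin2: "finite M2" and sub2: "M2 \<subseteq> EG" and Z2: "\<Union>M2 \<subseteq> Z2"
    and dis2: "\<forall>e\<in>M2. \<forall>e'\<in>M2. e \<noteq> e' \<longrightarrow> e \<inter> e' = {}"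
    and sup2: "supported_by VG V (take k SV) (drop k SV) M2"
    unfolding supported_matching_def matching_def by auto
  have cross: "e \<inter> e' = {}" if "e \<in> M1" "e' \<in> M2" for e e'
    using that Z1 Z2 assms(3) by blast
  have "M1 \<inter> M2 = {}"
  proof (rule equals0I)
    fix e assume e: "e \<in> M1 \<inter> M2"
    then have "e \<noteq> {}" using sub1 EG_nonempty by blast
    then show False using cross[of e e] e by simp
  qed
  then show "card (M1 \<union> M2) = card M1 + card M2"
    using fin1 fin2 by (rule card_Un_disjoint[rotated 2])
  have "e \<inter> e' = {}" if "e \<in> M1 \<union> M2" "e' \<in> M1 \<union> M2" "e \<noteq> e'" for e e'
    using that dis1 dis2 cross by (metis Int_commute Un_iff)
  moreover have "supported_by VG V (take k SV) (drop k SV) (M1 \<union> M2)"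
    using sup1 sup2 unfolding supported_by_def by blast
  ultimately show "supported_matching k (Z1 \<union> Z2) (M1 \<union> M2)"
    using fin1 fin2 sub1 sub2 Z1 Z2 unfolding supported_matching_def matching_def by auto
qed

lemma supported_matching_mono: "supported_matching k Z M \<Longrightarrow> Z \<subseteq> Z' \<Longrightarrow> supported_matching k Z' M"
  unfolding supported_matching_def by blast
lemma H_edge_with_colour_change:
  assumes "i \<in> {1..m}" "j \<in> {1..m}" "colour k (v, i) \<noteq> colour k (v, j)"
  shows "\<exists>a b. {a, b} \<in> EH \<and> a \<in> {1..m} \<and> b \<in> {1..m} \<and> colour k (v, a) \<noteq> colour k (v, b)"
proof -
  have "(i, j) \<in> {(x, y). {x, y} \<in> EH}\<^sup>*"
    using H_connected assms(1,2) unfolding connected_graph_def by blast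
  then obtain a b where ab: "{a, b} \<in> EH" "colour k (v, a) \<noteq> colour k (v, b)"
    using rtrancl_label_change[of i j _ "\<lambda>x. colour k (v, x)"] assms(3) by blast
  obtain x y where "{a, b} = {x, y}" "x \<in> {1..m}" "y \<in> {1..m}"
    using ab(1) H_connected unfolding connected_graph_def simple_graph_def by blast
  then have "a \<in> {1..m}" "b \<in> {1..m}" by (auto simp: doubleton_eq_iff)
  with ab show ?thesis by blast
qed

definition tree_rel :: "'b set \<Rightarrow> ('b \<times> 'b) set" where
  "tree_rel S = {(a, b). a \<in> S \<and> b \<in> S \<and> {a, b} \<in> ET}"

definition tree_connected :: "'b set \<Rightarrow> bool" where
  "tree_connected S \<longleftrightarrow> (\<forall>x\<in>S. \<forall>y\<in>S. (x, y) \<in> (tree_rel S)\<^sup>*)"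

lemma tree_edge_with_colour_change:
  assumes "tree_connected S" "a \<in> S" "b \<in> S" "colour k (a, i) \<noteq> colour k (b, i)"
  shows "\<exists>a' b'. a' \<in> S \<and> b' \<in> S \<and> {a', b'} \<in> ET \<and> colour k (a', i) \<noteq> colour k (b', i)"
  using assms rtrancl_label_change[of a b "tree_rel S" "\<lambda>x. colour k (x, i)"]
  unfolding tree_connected_def tree_rel_def by auto

definition bichromatic_layers :: "nat \<Rightarrow> 'b set \<Rightarrow> nat set" where
  "bichromatic_layers k S = {i \<in> {1..m}. \<exists>a\<in>S. \<exists>b\<in>S. colour k (a, i) \<noteq> colour k (b, i)}"

lemma layer_matching:
  assumes S: "S \<subseteq> VT" "tree_connected S" and many: "card (bichromatic_layers k S) \<ge> p"
  shows "\<exists>M. supported_matching k (S \<times> {1..m}) M \<and> card M = p"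
proof (rule supported_matching_of_choices[where \<phi> = snd])
  show "finite (bichromatic_layers k S)" unfolding bichromatic_layers_def by simp
  show "card (bichromatic_layers k S) \<ge> p" by (rule many)
next
  fix i assume "i \<in> bichromatic_layers k S"
  then obtain a b where "a \<in> S" "b \<in> S" "colour k (a, i) \<noteq> colour k (b, i)" and i: "i \<in> {1..m}"
    unfolding bichromatic_layers_def by blast
  then obtain a' b' where ab: "a' \<in> S" "b' \<in> S" "{a', b'} \<in> ET" "colour k (a', i) \<noteq> colour k (b', i)"
    using tree_edge_with_colour_change[OF S(2)] by blast
  have "(a', i) \<in> VG" "(b', i) \<in> VG" using ab(1,2) i S(1) unfolding TH_verts_def by auto
  then have "supports VG V (take k SV) (drop k SV) {(a', i), (b', i)}"
    using supports_if_colours_differ ab(4) by blast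
  moreover have "{(a', i), (b', i)} \<in> EG" using layer_edge_in_EG ab(3) i by blast
  ultimately show "\<exists>e\<in>EG. e \<subseteq> S \<times> {1..m} \<and> supports VG V (take k SV) (drop k SV) e \<and> (\<forall>x\<in>e. snd x = i)"
    using ab(1,2) i by (intro bexI[of _ "{(a', i), (b', i)}"]) auto
qed

lemma copy_matching:
  assumes S: "S \<subseteq> VT" "card S \<ge> p"
    and bichromatic: "\<And>v. v \<in> S \<Longrightarrow> \<exists>i\<in>{1..m}. \<exists>j\<in>{1..m}. colour k (v, i) \<noteq> colour k (v, j)"
  shows "\<exists>M. supported_matching k (S \<times> {1..m}) M \<and> card M = p"
proof (rule supported_matching_of_choices[where \<phi> = fst])
  show "finite S" using S(1) finite_VT finite_subset by blast
  show "card S \<ge> p" by (rule S(2))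
next
  fix v assume v: "v \<in> S"
  then obtain a b where ab: "{a, b} \<in> EH" "a \<in> {1..m}" "b \<in> {1..m}" "colour k (v, a) \<noteq> colour k (v, b)"
    using bichromatic H_edge_with_colour_change by blast
  have "(v, a) \<in> VG" "(v, b) \<in> VG" using ab(2,3) v S(1) unfolding TH_verts_def by auto
  then have "supports VG V (take k SV) (drop k SV) {(v, a), (v, b)}"
    using supports_if_colours_differ ab(4) by blast
  moreover have "{(v, a), (v, b)} \<in> EG" using copy_edge_in_EG ab(1) v S(1) by blast
  ultimately show "\<exists>e\<in>EG. e \<subseteq> S \<times> {1..m} \<and> supports VG V (take k SV) (drop k SV) e \<and> (\<forall>x\<in>e. fst x = v)"
    using ab(2,3) v by (intro bexI[of _ "{(v, a), (v, b)}"]) auto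
qed

text \<open>A monochromatic copy \<open>H\<^sup>v\<close> of colour \<open>X\<close> forces colour \<open>X\<close> on all layers but the
  bichromatic ones, so a vertex whose copy has \<open>p\<close> vertices of colour other than \<open>X\<close> needs
  \<open>p\<close> bichromatic layers.\<close>

lemma copies_bichromatic:
  assumes S: "S \<subseteq> VT" and u: "u \<in> S" "\<not> prefix_rich k u" and w: "w \<in> S" "\<not> suffix_rich k w"
    and few: "card (bichromatic_layers k S) < p" and v: "v \<in> S"
  shows "\<exists>i\<in>{1..m}. \<exists>j\<in>{1..m}. colour k (v, i) \<noteq> colour k (v, j)"
proof (rule ccontr)
  assume mono: "\<not> ?thesis"
  obtain i0 where i0: "(v, i0) \<in> V" using V_meets_copy S v by blast
  then have i0_range: "i0 \<in> {1..m}" using V_subset unfolding TH_verts_def by blast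
  define X where "X = colour k (v, i0)"
  have layers: "{a} \<times> {1..m} - {x. colour k x = X} \<subseteq> {a} \<times> bichromatic_layers k S" if "a \<in> S" for a
  proof
    fix y assume y: "y \<in> {a} \<times> {1..m} - {x. colour k x = X}"
    then obtain i where i: "y = (a, i)" "i \<in> {1..m}" by blast
    have "colour k (v, i) = X" using mono i(2) i0_range unfolding X_def by blast
    then have "i \<in> bichromatic_layers k S" using y i that v unfolding bichromatic_layers_def by auto
    then show "y \<in> {a} \<times> bichromatic_layers k S" using i(1) by blast
  qed
  have small: "card ({a} \<times> {1..m} - {x. colour k x = X}) < p" if "a \<in> S" for a
  proof -
    have "card ({a} \<times> {1..m} - {x. colour k x = X}) \<le> card ({a} \<times> bichromatic_layers k S)"
      by (rule card_mono[OF _ layers[OF that]]) (simp add: bichromatic_layers_def)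
    also have "\<dots> = card (bichromatic_layers k S)" by (simp add: card_cartesian_product)
    finally show ?thesis using few by simp
  qed
  have "X = 0 \<or> X = 1" using colour_of_V[OF i0, of k] unfolding X_def colour_def by (auto split: if_splits)
  then show False
  proof
    assume "X = 0"
    then have "{u} \<times> {1..m} - pre k = {u} \<times> {1..m} - {x. colour k x = X}"
      by (auto simp: colour_eq_0_iff)
    then show False using small[OF u(1)] u(2) unfolding prefix_rich_def outside_prefix_def by simp
  next
    assume "X = 1"
    then have "{w} \<times> {1..m} - suf k \<subseteq> {w} \<times> {1..m} - {x. colour k x = X}"
      using suf_if_colour_eq_1 by auto
    then have "outside_suffix {w} k \<le> card ({w} \<times> {1..m} - {x. colour k x = X})"
      unfolding outside_suffix_def by (rule card_mono[rotated]) simp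
    then show False using small[OF w(1)] w(2) unfolding suffix_rich_def by simp
  qed
qed

lemma supported_matching_of_connected:
  assumes "S \<subseteq> VT" "tree_connected S" "card S \<ge> p"
    and "u \<in> S" "\<not> prefix_rich k u" and "w \<in> S" "\<not> suffix_rich k w"
  shows "\<exists>M. supported_matching k (S \<times> {1..m}) M \<and> card M = p"
proof (cases "card (bichromatic_layers k S) \<ge> p")
  case True
  then show ?thesis using layer_matching assms(1,2) by blast
next
  case False
  then have "card (bichromatic_layers k S) < p" by simp
  then show ?thesis using copy_matching[OF assms(1,3)] copies_bichromatic[OF assms(1,4-7)] by blast
qed

lemma tree_connected_if_root:
  assumes "\<And>x. x \<in> S \<Longrightarrow> (r, x) \<in> (tree_rel S)\<^sup>*"
  shows "tree_connected S"
proof -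
  have "sym (tree_rel S)" unfolding sym_def tree_rel_def by (auto simp: insert_commute)
  then have "sym ((tree_rel S)\<^sup>*)" by (rule sym_rtrancl)
  then show ?thesis
    unfolding tree_connected_def using assms by (meson rtrancl_trans symD)
qed

lemma tree_rel_rtrancl_mono: "S \<subseteq> S' \<Longrightarrow> (x, y) \<in> (tree_rel S)\<^sup>* \<Longrightarrow> (x, y) \<in> (tree_rel S')\<^sup>*"
  using rtrancl_mono[of "tree_rel S" "tree_rel S'"] unfolding tree_rel_def by blast

lemma subtree_path:
  assumes "length w + j \<le> h" "set w \<subseteq> {0, 1, 2}"
  shows "z \<in> ctt_verts j \<Longrightarrow> (g w, g (w @ z)) \<in> (tree_rel (g ` ctt_subtree w j))\<^sup>*"
proof (induction z rule: rev_induct)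
  case Nil
  then show ?case by simp
next
  case (snoc c z)
  have z: "z \<in> ctt_verts j" "length z < j" "c < 3" using snoc.prems unfolding ctt_verts_def by auto
  have "w @ z \<in> ctt_verts h" "length (w @ z) < h" using z assms unfolding ctt_verts_def by auto
  then have "{g (w @ z), g ((w @ z) @ [c])} \<in> ET" using g_edge z(3) by blast
  moreover have "w @ z \<in> ctt_subtree w j" "w @ (z @ [c]) \<in> ctt_subtree w j"
    unfolding ctt_subtree_def using z(1) snoc.prems by blast+
  ultimately have "(g (w @ z), g (w @ z @ [c])) \<in> tree_rel (g ` ctt_subtree w j)"
    unfolding tree_rel_def by simp
  with snoc.IH[OF z(1)] show ?case by (rule rtrancl_into_rtrancl)
qed

lemma tree_connected_subtree:
  assumes "length w + j \<le> h" "set w \<subseteq> {0, 1, 2}"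
  shows "tree_connected (g ` ctt_subtree w j)"
proof (rule tree_connected_if_root)
  fix x assume "x \<in> g ` ctt_subtree w j"
  then obtain z where "z \<in> ctt_verts j" "x = g (w @ z)" unfolding ctt_subtree_def by blast
  then show "(g w, x) \<in> (tree_rel (g ` ctt_subtree w j))\<^sup>*" using subtree_path[OF assms] by simp
qed

lemma tree_connected_root_with_two_children:
  assumes "length w + Suc j \<le> h" "set w \<subseteq> {0, 1, 2}" "a < 3" "c < 3"
  shows "tree_connected (g ` insert w (ctt_subtree (w @ [a]) j \<union> ctt_subtree (w @ [c]) j))" (is "tree_connected ?R")
proof (rule tree_connected_if_root)
  have child: "(g w, x) \<in> (tree_rel ?R)\<^sup>*" if b: "b = a \<or> b = c" and x: "x \<in> g ` ctt_subtree (w @ [b]) j" for b x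
  proof -
    have b3: "b < 3" using b assms(3,4) by blast
    have "w \<in> ctt_verts h" "length w < h" using assms(1,2) unfolding ctt_verts_def by auto
    then have "{g w, g (w @ [b])} \<in> ET" using g_edge b3 by blast
    moreover have sub: "g ` ctt_subtree (w @ [b]) j \<subseteq> ?R" using b by blast
    ultimately have "(g w, g (w @ [b])) \<in> tree_rel ?R"
      using root_in_ctt_subtree[of "w @ [b]" j] unfolding tree_rel_def by blast
    moreover obtain z where "z \<in> ctt_verts j" "x = g ((w @ [b]) @ z)"
      using x unfolding ctt_subtree_def by blast
    moreover have "length (w @ [b]) + j \<le> h" "set (w @ [b]) \<subseteq> {0, 1, 2}" using assms(1,2) b3 by auto
    ultimately show ?thesis
      using subtree_path tree_rel_rtrancl_mono[OF sub] by (blast intro: converse_rtrancl_into_rtrancl)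
  qed
  fix x assume "x \<in> ?R"
  then consider "x = g w" | "x \<in> g ` ctt_subtree (w @ [a]) j" | "x \<in> g ` ctt_subtree (w @ [c]) j" by blast
  then show "(g w, x) \<in> (tree_rel ?R)\<^sup>*" using child by cases auto
qed

lemma card_image_subtree:
  assumes "length w + j \<le> h" "set w \<subseteq> {0, 1, 2}"
  shows "card (g ` ctt_subtree w j) = ctt_size j"
proof -
  have "inj_on g (ctt_subtree w j)"
    using bij_betw_imp_inj_on[OF g_bij] ctt_subtree_subset[OF assms] inj_on_subset by blast
  then show ?thesis by (simp add: card_image card_ctt_subtree)
qed

lemma image_subtree_subset: "length w + j \<le> h \<Longrightarrow> set w \<subseteq> {0, 1, 2} \<Longrightarrow> g ` ctt_subtree w j \<subseteq> VT"
  using ctt_subtree_subset bij_betw_imp_surj_on[OF g_bij] by blast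
lemma outside_prefix_le_Suc:
  assumes "k < length SV" "finite Q"
  shows "outside_prefix Q k \<le> outside_prefix Q (Suc k) + 1"
proof -
  have "Q \<times> {1..m} - pre k \<subseteq> insert (SV ! k) (Q \<times> {1..m} - pre (Suc k))"
    using assms(1) by (auto simp: take_Suc_conv_app_nth)
  then have "outside_prefix Q k \<le> card (insert (SV ! k) (Q \<times> {1..m} - pre (Suc k)))"
    unfolding outside_prefix_def by (rule card_mono[rotated]) (use assms(2) in simp)
  also have "\<dots> \<le> outside_prefix Q (Suc k) + 1"
    unfolding outside_prefix_def using assms(2) by (simp add: card_insert_if)
  finally show ?thesis .
qed

lemma balanced_if_outside_prefix_eq:
  assumes Q: "Q \<subseteq> VT" "card Q \<ge> p + 1" and u: "u \<in> Q" "\<not> prefix_rich k u"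
    and exact: "outside_prefix Q k = p\<^sup>2"
  shows "balanced Q k"
proof -
  have fin: "finite Q" using Q(1) finite_VT finite_subset by blast
  have "2 * p\<^sup>2 \<le> card Q * m" using double_square_le_mult Q(2) m_ge by simp
  then have suffix: "outside_suffix Q k \<ge> p\<^sup>2" using outside_cover[OF fin, of k] exact by simp
  have "\<exists>v\<in>Q. \<not> suffix_rich k v"
  proof (rule ccontr)
    assume "\<not> ?thesis"
    then have "p + 1 \<le> outside_prefix {v} k" if "v \<in> Q" for v
      using that outside_cover[of "{v}" k] m_ge unfolding suffix_rich_def by auto
    then have "card Q * (p + 1) \<le> outside_prefix Q k"
      unfolding outside_prefix_eq_sum[OF fin] using sum_bounded_below[of Q "p + 1"] by simp
    moreover have "(p + 1) * (p + 1) \<le> card Q * (p + 1)" using Q(2) by (rule mult_le_mono1)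
    ultimately show False using exact by (simp add: power2_eq_square)
  qed
  then show ?thesis unfolding balanced_def using u suffix exact by auto
qed

lemma balanced_if_almost_all_prefix_rich:
  assumes Q: "Q \<subseteq> VT" "card Q \<ge> p + 1" and u: "u \<in> Q" "\<not> prefix_rich k u"
    and prefix: "outside_prefix Q k \<ge> p\<^sup>2" and rich: "\<And>v. v \<in> Q - {z} \<Longrightarrow> prefix_rich k v"
  shows "balanced Q k"
proof -
  have fin: "finite (Q - {z})" using Q(1) finite_VT finite_subset by blast
  have card: "card (Q - {z}) \<ge> p" using diff_card_le_card_Diff[of "{z}" Q] Q(2) by simp
  then have "Q - {z} \<noteq> {}" using p_pos by (metis card.empty le_zero_eq not_one_le_zero)
  then obtain v where v: "v \<in> Q - {z}" by blast
  have "p \<le> outside_suffix {v} k" if "v \<in> Q - {z}" for v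
    using rich[OF that] outside_cover[of "{v}" k] m_ge unfolding prefix_rich_def by simp
  then have "card (Q - {z}) * p \<le> outside_suffix (Q - {z}) k"
    unfolding outside_suffix_eq_sum[OF fin] using sum_bounded_below[of "Q - {z}" p] by simp
  moreover have "p * p \<le> card (Q - {z}) * p" using card by (rule mult_le_mono1)
  moreover have "outside_suffix (Q - {z}) k \<le> outside_suffix Q k"
    using outside_mono(2)[of "Q - {z}" Q] Q(1) finite_VT finite_subset by blast
  ultimately have "outside_suffix Q k \<ge> p\<^sup>2" unfolding power2_eq_square by linarith
  moreover have "\<not> suffix_rich k v" using rich[OF v] not_prefix_rich_and_suffix_rich by blast
  ultimately show ?thesis unfolding balanced_def using u v prefix by blast
qed

text \<open>Move the split point right as long as some vertex of \<open>Q\<close> is not prefix-rich and at least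
  \<open>p\<^sup>2\<close> vertices over \<open>Q\<close> stay outside the prefix; at the last such point the other two
  conditions of balance hold as well.\<close>

lemma balanced_split_exists:
  assumes Q: "Q \<subseteq> VT" "card Q \<ge> p + 1"
  shows "\<exists>k\<le>length SV. balanced Q k"
proof -
  have fin: "finite Q" using Q(1) finite_VT finite_subset by blast
  have big: "2 * p\<^sup>2 \<le> card Q * m" using double_square_le_mult Q(2) m_ge by simp
  define P where "P k \<longleftrightarrow> k \<le> length SV \<and> (\<exists>u\<in>Q. \<not> prefix_rich k u) \<and> outside_prefix Q k \<ge> p\<^sup>2" for k
  have bounded: "P k \<Longrightarrow> k \<le> length SV" for k unfolding P_def by simp
  have "\<not> prefix_rich 0 u" for u unfolding prefix_rich_def outside_prefix_def using m_ge by simp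
  moreover have "outside_prefix Q 0 = card Q * m" unfolding outside_prefix_def by (simp add: card_cartesian_product)
  moreover have "Q \<noteq> {}" using Q(2) by auto
  ultimately have "P 0" unfolding P_def using big by auto
  define k where "k = (GREATEST k. P k)"
  have "P k" unfolding k_def using GreatestI_nat[of P 0 "length SV"] \<open>P 0\<close> bounded by blast
  then have k: "k \<le> length SV" and u: "\<exists>u\<in>Q. \<not> prefix_rich k u" and prefix: "outside_prefix Q k \<ge> p\<^sup>2"
    unfolding P_def by blast+
  have not_P: "\<not> P (Suc k)" using Greatest_le_nat[of P "Suc k" "length SV"] bounded unfolding k_def by fastforce
  consider "k = length SV" | "k < length SV" "outside_prefix Q (Suc k) < p\<^sup>2"
    | "k < length SV" "\<forall>u\<in>Q. prefix_rich (Suc k) u"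
    using k not_P unfolding P_def by fastforce
  then have "balanced Q k"
  proof cases
    case 1
    then have "outside_suffix {v} k = m" for v unfolding outside_suffix_def by simp
    then have "\<forall>v. \<not> suffix_rich k v" using m_ge unfolding suffix_rich_def by simp
    moreover have "outside_suffix Q k = card Q * m" using 1 unfolding outside_suffix_def by (simp add: card_cartesian_product)
    ultimately show ?thesis unfolding balanced_def using u prefix Q(2) big by auto
  next
    case 2
    then have "outside_prefix Q k = p\<^sup>2" using outside_prefix_le_Suc[OF 2(1) fin] prefix by simp
    then show ?thesis using balanced_if_outside_prefix_eq[OF Q] u by blast
  next
    case 3
    have "prefix_rich k v" if "v \<in> Q - {fst (SV ! k)}" for v
    proof -
      have "SV ! k \<notin> {v} \<times> {1..m}" using that by auto
      then have "{v} \<times> {1..m} - pre k = {v} \<times> {1..m} - pre (Suc k)"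
        using 3(1) by (auto simp: take_Suc_conv_app_nth)
      then show ?thesis using 3(2) that unfolding prefix_rich_def outside_prefix_def by auto
    qed
    then show ?thesis using balanced_if_almost_all_prefix_rich[OF Q] u prefix by blast
  qed
  with k show ?thesis by blast
qed

definition has_balanced_matching :: "'b set \<Rightarrow> nat \<Rightarrow> bool" where
  "has_balanced_matching Q n \<longleftrightarrow> (\<exists>k M. k \<le> length SV \<and> supported_matching k (Q \<times> {1..m}) M
     \<and> card M \<ge> n \<and> balanced Q k)"

lemma subtree_base:
  assumes "length w + j \<le> h" "set w \<subseteq> {0, 1, 2}" "p < ctt_size j"
  shows "has_balanced_matching (g ` ctt_subtree w j) p"
proof -
  let ?Q = "g ` ctt_subtree w j"
  have Q: "?Q \<subseteq> VT" "card ?Q = ctt_size j"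
    using image_subtree_subset[OF assms(1,2)] card_image_subtree[OF assms(1,2)] by blast+
  obtain k where k: "k \<le> length SV" "balanced ?Q k"
    using balanced_split_exists[OF Q(1)] Q(2) assms(3) by auto
  then obtain u v where "u \<in> ?Q" "\<not> prefix_rich k u" "v \<in> ?Q" "\<not> suffix_rich k v"
    unfolding balanced_def by blast
  then obtain M where "supported_matching k (?Q \<times> {1..m}) M" "card M = p"
    using supported_matching_of_connected[OF Q(1) tree_connected_subtree[OF assms(1,2)]] Q(2) assms(3)
    by (metis less_imp_le)
  with k show ?thesis unfolding has_balanced_matching_def by auto
qed

text \<open>Order the three children by their split points and keep the split and the matching of
  the middle one; the root together with the other two children is connected, contains a vertex
  that is not prefix-rich (from the child with the largest split point) and one that is not
  suffix-rich (from the child with the smallest), and so carries \<open>p\<close> further edges.\<close>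

lemma subtree_step:
  assumes len: "length w + Suc j \<le> h" and w: "set w \<subseteq> {0, 1, 2}" and p: "p \<le> ctt_size j"
    and children: "\<And>c. c < 3 \<Longrightarrow> has_balanced_matching (g ` ctt_subtree (w @ [c]) j) n"
  shows "has_balanced_matching (g ` ctt_subtree w (Suc j)) (n + p)"
proof -
  let ?T = "\<lambda>c. g ` ctt_subtree (w @ [c]) j" and ?P = "g ` ctt_subtree w (Suc j)"
  have "\<forall>c. \<exists>k. c < 3 \<longrightarrow> k \<le> length SV \<and> balanced (?T c) k
      \<and> (\<exists>M. supported_matching k (?T c \<times> {1..m}) M \<and> card M \<ge> n)"
    using children unfolding has_balanced_matching_def by blast
  from choice[OF this] obtain K where K: "\<And>c. c < 3 \<Longrightarrow> K c \<le> length SV \<and> balanced (?T c) (K c)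
      \<and> (\<exists>M. supported_matching (K c) (?T c \<times> {1..m}) M \<and> card M \<ge> n)"
    by blast
  obtain a b c where abc: "a < 3" "b < 3" "c < 3" "a \<noteq> b" "a \<noteq> c" "b \<noteq> c" "K a \<le> K b" "K b \<le> K c"
    using exists_sorted_triple[of K] by blast
  let ?k = "K b" and ?R = "g ` insert w (ctt_subtree (w @ [a]) j \<union> ctt_subtree (w @ [c]) j)"
  obtain MB where MB: "supported_matching ?k (?T b \<times> {1..m}) MB" "card MB \<ge> n"
    using K[OF abc(2)] by blast
  have B_parent: "?T b \<subseteq> ?P" by (rule image_mono[OF child_ctt_subtree_subset[OF abc(2)]])
  have "insert w (ctt_subtree (w @ [a]) j \<union> ctt_subtree (w @ [c]) j) \<subseteq> ctt_subtree w (Suc j)"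
    using child_ctt_subtree_subset[OF abc(1)] child_ctt_subtree_subset[OF abc(3)]
      root_in_ctt_subtree[of w "Suc j"] by blast
  then have R_parent: "?R \<subseteq> ?P" by (rule image_mono)
  have P_VT: "?P \<subseteq> VT" by (rule image_subtree_subset[OF len w])
  have fin_P: "finite ?P" using P_VT finite_VT finite_subset by blast
  have "set (w @ [a]) \<subseteq> {0, 1, 2}" using w abc(1) by auto
  then have "p \<le> card (?T a)" using card_image_subtree[of "w @ [a]" j] len p by simp
  also have "\<dots> \<le> card ?R" by (rule card_mono) (use R_parent fin_P finite_subset in auto)
  finally have card_R: "p \<le> card ?R" .
  obtain u where "u \<in> ?T c" "\<not> prefix_rich (K c) u"
    using K[OF abc(3)] unfolding balanced_def by blast
  then have u: "u \<in> ?R" "\<not> prefix_rich ?k u" using prefix_rich_mono[OF abc(8)] by auto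
  obtain v where "v \<in> ?T a" "\<not> suffix_rich (K a) v"
    using K[OF abc(1)] unfolding balanced_def by blast
  then have v: "v \<in> ?R" "\<not> suffix_rich ?k v" using suffix_rich_antimono[OF abc(7)] by auto
  obtain MR where MR: "supported_matching ?k (?R \<times> {1..m}) MR" "card MR = p"
    using supported_matching_of_connected[OF _ tree_connected_root_with_two_children[OF len w abc(1,3)]
        card_R u v] R_parent P_VT by blast
  have "?T b \<inter> ?R = {}"
  proof -
    have "inj_on g (ctt_subtree w (Suc j))"
      using bij_betw_imp_inj_on[OF g_bij] ctt_subtree_subset[OF len w] inj_on_subset by blast
    then have "?T b \<inter> ?R = g ` (ctt_subtree (w @ [b]) j \<inter> insert w (ctt_subtree (w @ [a]) j \<union> ctt_subtree (w @ [c]) j))"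
      using inj_on_image_Int child_ctt_subtree_subset[OF abc(2)] \<open>insert w _ \<subseteq> _\<close> by metis
    then show ?thesis using child_ctt_subtree_disjoint[of b a c w j] abc(4,6) by simp
  qed
  then have "(?T b \<times> {1..m}) \<inter> (?R \<times> {1..m}) = {}" by blast
  note union = supported_matching_Un[OF MB(1) MR(1) this]
  have "supported_matching ?k (?P \<times> {1..m}) (MB \<union> MR)"
    by (rule supported_matching_mono[OF union(1)]) (use B_parent R_parent in blast)
  moreover have "card (MB \<union> MR) \<ge> n + p" using union(2) MB(2) MR(2) by simp
  moreover have "balanced ?P ?k" using balanced_mono[OF B_parent fin_P] K[OF abc(2)] by blast
  ultimately show ?thesis using K[OF abc(2)] unfolding has_balanced_matching_def by blast
qed

lemma subtree_matching:
  assumes "p < ctt_size (Suc t)"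
  shows "length w + Suc t + d \<le> h \<Longrightarrow> set w \<subseteq> {0, 1, 2}
    \<Longrightarrow> has_balanced_matching (g ` ctt_subtree w (Suc t + d)) (p * Suc d)"
proof (induction d arbitrary: w)
  case 0
  then show ?case using subtree_base assms by simp
next
  case (Suc d)
  have "p \<le> ctt_size (Suc t + d)"
    using assms strict_mono_less_eq[OF strict_mono_ctt_size, of "Suc t" "Suc t + d"] by simp
  moreover have "has_balanced_matching (g ` ctt_subtree (w @ [c]) (Suc t + d)) (p * Suc d)" if "c < 3" for c
  proof -
    have "set (w @ [c]) \<subseteq> {0, 1, 2}" using Suc.prems(2) that by auto
    then show ?thesis using Suc.IH[of "w @ [c]"] Suc.prems(1) by simp
  qed
  ultimately have "has_balanced_matching (g ` ctt_subtree w (Suc (Suc t + d))) (p * Suc d + p)"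
    using subtree_step[of w "Suc t + d"] Suc.prems by simp
  then show ?case by (simp add: add.commute)
qed

lemma split_bounds_if_balanced:
  assumes "balanced VT k"
  shows "card VG \<ge> length (take k SV) + p\<^sup>2" "card VG \<ge> length (drop k SV) + p\<^sup>2"
proof -
  have pre: "pre k \<subseteq> VG" using set_take_subset[of k SV] V_subset set_SV by blast
  have suf: "suf k \<subseteq> VG" using set_drop_subset[of k SV] V_subset set_SV by blast
  have "card (pre k) = length (take k SV)" "card (suf k) = length (drop k SV)"
    using distinct_SV by (simp_all add: distinct_card)
  moreover have "outside_prefix VT k = card VG - card (pre k)"
    unfolding outside_prefix_def TH_verts_def[symmetric]
    by (rule card_Diff_subset[OF finite_subset[OF pre finite_VG] pre])
  moreover have "outside_suffix VT k = card VG - card (suf k)"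
    unfolding outside_suffix_def TH_verts_def[symmetric]
    by (rule card_Diff_subset[OF finite_subset[OF suf finite_VG] suf])
  moreover have "card (pre k) \<le> card VG" "card (suf k) \<le> card VG"
    using card_mono[OF finite_VG pre] card_mono[OF finite_VG suf] by simp_all
  ultimately show "card VG \<ge> length (take k SV) + p\<^sup>2" "card VG \<ge> length (drop k SV) + p\<^sup>2"
    using assms unfolding balanced_def by linarith+
qed

lemma trivial_split:
  assumes "card VT \<ge> p"
  shows "\<exists>k\<le>length SV. card VG \<ge> length (take k SV) + p\<^sup>2 \<and> card VG \<ge> length (drop k SV) + p\<^sup>2"
proof -
  have "2 * p\<^sup>2 \<le> card VG"
    using double_square_le_mult[OF assms m_ge] unfolding TH_verts_def by (simp add: card_cartesian_product)
  moreover have "length SV \<le> card VG"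
    using distinct_card[OF distinct_SV] set_SV card_mono[OF finite_VG V_subset] by simp
  ultimately show ?thesis by (intro exI[of _ "min (length SV) (card VG - p\<^sup>2)"]) auto
qed

lemma witnessing_matching_exists:
  assumes "card VT \<ge> p"
  shows "\<exists>M k. witnessing VG EG V SV M \<and> card M \<ge> p * (tr (real (card VT)) - tr (real p))
    \<and> k \<le> length SV \<and> supported_by VG V (take k SV) (drop k SV) M
    \<and> card VG \<ge> length (take k SV) + p\<^sup>2 \<and> card VG \<ge> length (drop k SV) + p\<^sup>2"
proof -
  have card_VT: "card VT = ctt_size h"
    unfolding ctt_size_def using bij_betw_same_card[OF g_bij] by simp
  obtain t where t: "ctt_size t \<le> p" "p < ctt_size (Suc t)" using ctt_size_bracket p_pos by blast
  have tr: "tr (real p) = t" "tr (real (card VT)) = h"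
    using tr_eqI[OF t] tr_eqI[of h "card VT"] card_VT strict_mono_ctt_size by (simp_all add: strict_mono_Suc_iff)
  have "ctt_size t \<le> ctt_size h" using t(1) assms card_VT by simp
  then have "t \<le> h" using strict_mono_less_eq[OF strict_mono_ctt_size] by blast
  show ?thesis
  proof (cases "h = t")
    case True
    obtain k where "k \<le> length SV" "card VG \<ge> length (take k SV) + p\<^sup>2" "card VG \<ge> length (drop k SV) + p\<^sup>2"
      using trivial_split[OF assms] by blast
    moreover have "witnessing VG EG V SV {}" "supported_by VG V (take k SV) (drop k SV) {}"
      unfolding witnessing_def matching_def supported_by_def by auto
    ultimately show ?thesis using tr True by (intro exI[of _ "{}"] exI[of _ k]) simp
  next
    case False
    then obtain d where d: "h = Suc t + d" using \<open>t \<le> h\<close> less_iff_Suc_add[of t h] by auto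
    have "g ` ctt_subtree [] h = VT" using bij_betw_imp_surj_on[OF g_bij] by (simp add: ctt_subtree_Nil)
    then obtain k M where k: "k \<le> length SV" and M: "supported_matching k (VT \<times> {1..m}) M"
      and card_M: "card M \<ge> p * Suc d" and bal: "balanced VT k"
      using subtree_matching[OF t(2), of "[]" d] d unfolding has_balanced_matching_def by auto
    have "matching EG M" and supp: "supported_by VG V (take k SV) (drop k SV) M"
      using M unfolding supported_matching_def by blast+
    then have "witnessing VG EG V SV M" unfolding witnessing_def using k by blast
    moreover have "p * Suc d = p * (tr (real (card VT)) - tr (real p))" using tr d by simp
    ultimately show ?thesis
      using card_M k supp split_bounds_if_balanced[OF bal] by (intro exI[of _ M] exI[of _ k]) simp
  qed
qed

end

theorem lemma3:
  fixes p m :: nat and EH :: "nat set set"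
    and VT :: "'b set" and ET :: "'b set set"
    and V :: "('b \<times> nat) set" and SV :: "('b \<times> nat) list"
  assumes "p \<ge> 1"
    and "connected_graph {1..m} EH" and "m \<ge> 2 * p"
    and "complete_ternary_tree VT ET" and "card VT \<ge> p"
    and "V \<subseteq> TH_verts VT m" and "OC VT V = VT"
    and "is_ordering SV V"
  shows "\<exists>M k. witnessing (TH_verts VT m) (TH_edges VT ET EH m) V SV M
           \<and> card M \<ge> p * (tr (real (card VT)) - tr (real p))
           \<and> k \<le> length SV
           \<and> supported_by (TH_verts VT m) V (take k SV) (drop k SV) M
           \<and> card (TH_verts VT m) \<ge> length (take k SV) + p ^ 2
           \<and> card (TH_verts VT m) \<ge> length (drop k SV) + p ^ 2"
proof -
  obtain g h where "bij_betw g (ctt_verts h) VT"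
    "\<And>x c. x \<in> ctt_verts h \<Longrightarrow> length x < h \<Longrightarrow> c < 3 \<Longrightarrow> {g x, g (x @ [c])} \<in> ET"
    using complete_ternary_tree_parametrization[OF assms(4)] by metis
  then interpret ternary_product_ordering p m EH VT ET V SV h g
    using assms(1-3,6-8) by (intro ternary_product_ordering.intro) simp_all
  show ?thesis by (rule witnessing_matching_exists[OF assms(5)])
qed

end
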